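(* Let $A\in\mathbb{R}^{m\times n}$ with $m>n$ be a full-rank standardized matrix with no two distinct rows parallel. Let $x\in\mathbb{R}^n$, $w\in\mathbb{R}^m$, and $b=Ax+w$. Let $x_k$ denote the $k$-th iterate of the two-subspace Kaczmarz method applied to $(A,b)$ from a deterministic starting point $x_0$. Then for every $k\ge0$, $$\mathbb{E}\|x-x_k\|_2\le\eta^{k/2}\|x-x_0\|_2+\frac{3}{1-\sqrt\eta}\cdot\frac{\|w\|_\infty}{\sqrt{1-\Delta^2}},$$ where $\eta=\left(1-\frac1R\right)^2-\frac DR$ and $D=\min\left\{\frac{\delta^2(1-\delta)}{1+\delta},\frac{\Delta^2(1-\Delta)}{1+\Delta}\right\}$.
   Context: $A\in\mathbb{R}^{m\times n}$ has rows $a_1,\dots,a_m$. It is called standardized if $\|a_i\|_2=1$ for all $i$. "No two distinct rows parallel" means $|\langle a_r,a_s\rangle|<1$ for all $r\ne s$. $\|w\|_\infty$ denotes the largest absolute value of an entry of $w$. Two-subspace Kaczmarz method for $(A,b)$, $b\in\mathbb{R}^m$: start from $x_0\in\mathbb{R}^n$. For $k=1,2,\dots$, choose an ordered pair $(r,s)$ of distinct indices in $\{1,\dots,m\}$ uniformly at random among the $m^2-m$ such pairs, independently of all previous choices. Then set $\mu_k=\langle a_r,a_s\rangle$, $y_k=x_{k-1}+(b_s-\langle x_{k-1},a_s\rangle)a_s$, $v_k=\frac{a_r-\mu_k a_s}{\sqrt{1-\mu_k^2}}$, $\beta_k=\frac{b_r-b_s\mu_k}{\sqrt{1-\mu_k^2}}$,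 and $x_k=y_k+(\beta_k-\langle y_k,v_k\rangle)v_k$. Coherence parameters: $\Delta=\max_{j\ne k}|\langle a_j,a_k\rangle|$ and $\delta=\min_{j\ne k}|\langle a_j,a_k\rangle|$. Scaled condition number: $R=\|A\|_F^2\|A^{-1}\|^2$, where $\|A^{-1}\|=\inf\{M: M\|Az\|_2\ge\|z\|_2\ \text{for all } z\}$, i.e. the reciprocal of the smallest singular value of $A$. *)

theory Defs
  imports "HOL-Analysis.Analysis" "HOL-Probability.Probability"
begin

text \<open>Rows of A are the vectors A $ i, for i in the finite row index type 'm.\<close>

definition standardized :: "real^'n^'m \<Rightarrow> bool" where
  "standardized A \<longleftrightarrow> (\<forall>i. norm (A $ i) = 1)"

definition no_parallel_rows :: "real^'n^'m \<Rightarrow> bool" where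
  "no_parallel_rows A \<longleftrightarrow> (\<forall>r s. r \<noteq> s \<longrightarrow> \<bar>inner (A $ r) (A $ s)\<bar> < 1)"

definition coh_max :: "real^'n^'m \<Rightarrow> real" where
  "coh_max A = Max {\<bar>inner (A $ j) (A $ k)\<bar> | j k. j \<noteq> k}"

definition coh_min :: "real^'n^'m \<Rightarrow> real" where
  "coh_min A = Min {\<bar>inner (A $ j) (A $ k)\<bar> | j k. j \<noteq> k}"

definition frobenius_norm :: "real^'n^'m \<Rightarrow> real" where
  "frobenius_norm A = sqrt (\<Sum>i\<in>UNIV. \<Sum>j\<in>UNIV. (A $ i $ j)^2)"

text \<open>norm of A^{-1}: inf of M with M * norm (A z) \<ge> norm z for all z.\<close>
definition inv_norm :: "real^'n^'m \<Rightarrow> real" where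
  "inv_norm A = Inf {M. \<forall>z. M * norm (A *v z) \<ge> norm z}"

definition scaled_cond :: "real^'n^'m \<Rightarrow> real" where
  "scaled_cond A = (frobenius_norm A)^2 * (inv_norm A)^2"

definition sup_norm :: "real^'m \<Rightarrow> real" where
  "sup_norm w = Max {\<bar>w $ i\<bar> | i. True}"

definition tsk_step :: "real^'n^'m \<Rightarrow> real^'m \<Rightarrow> real^'n \<Rightarrow> 'm \<times> 'm \<Rightarrow> real^'n" where
  "tsk_step A b x0 p = (case p of (r, s) \<Rightarrow>
     let mu = inner (A $ r) (A $ s);
         y = x0 + (b $ s - inner x0 (A $ s)) *\<^sub>R (A $ s);
         v = (1 / sqrt (1 - mu^2)) *\<^sub>R (A $ r - mu *\<^sub>R A $ s);
         beta = (b $ r - b $ s * mu) / sqrt (1 - mu^2)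
     in y + (beta - inner y v) *\<^sub>R v)"

definition pair_pmf :: "('m::finite \<times> 'm) pmf" where
  "pair_pmf = pmf_of_set {(r, s). r \<noteq> s}"

fun tsk_dist :: "real^'n^'m::finite \<Rightarrow> real^'m \<Rightarrow> real^'n \<Rightarrow> nat \<Rightarrow> (real^'n) pmf" where
  "tsk_dist A b x0 0 = return_pmf x0"
| "tsk_dist A b x0 (Suc k) =
     bind_pmf (tsk_dist A b x0 k) (\<lambda>x. map_pmf (tsk_step A b x) pair_pmf)"

end

theory Submission
  imports Defs
begin

(* Write d = x' - x for the error of the current iterate x' and a_r for the rows of A.  For a
   fixed pair (r, s) one step removes from d its projection onto span {a_r, a_s} (the pair gain)
   and adds a noise term of length at most 3 |w|_\<infinity> / sqrt (1 - \<Delta>^2).  Averaged over all pairs the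
   gain is at least (1 - \<eta>) |d|^2: the residuals c_r - \<mu> c_s are controlled by the smallest
   singular value (the lower frame bound m / R), and the coherence terms by the constant D.
   Cauchy-Schwarz turns this into E |x - x_new| \<le> sqrt \<eta> |d| + noise, and unrolling the affine
   recursion over k steps gives the theorem. *)

definition off_diagonal :: "('m::finite \<times> 'm) set" where
  "off_diagonal = {(r, s). r \<noteq> s}"

lemma off_diagonal_Sigma: "off_diagonal = (SIGMA r:UNIV. UNIV - {r})"
  unfolding off_diagonal_def by auto

lemma sum_off_diagonal_swap:
  fixes f :: "'m::finite \<Rightarrow> 'm \<Rightarrow> 'a::comm_monoid_add"
  shows "(\<Sum>(r, s)\<in>off_diagonal. f r s) = (\<Sum>(r, s)\<in>off_diagonal. f s r)"
  by (rule sum.reindex_bij_witness[where i = prod.swap and j = prod.swap])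
     (auto simp: off_diagonal_def)

lemma sum_off_diagonal_fst:
  fixes f :: "'m::finite \<Rightarrow> real"
  shows "(\<Sum>(r, s)\<in>off_diagonal. f r) = (real CARD('m) - 1) * sum f UNIV"
proof -
  have "card (UNIV - {r}) = CARD('m) - 1" for r :: 'm
    by (simp add: card_Diff_singleton)
  then show ?thesis
    by (simp add: off_diagonal_Sigma sum.Sigma[symmetric] sum_distrib_right[symmetric] of_nat_diff
        mult.commute)
qed

lemma sum_off_diagonal_snd:
  fixes f :: "'m::finite \<Rightarrow> real"
  shows "(\<Sum>(r, s)\<in>off_diagonal. f s) = (real CARD('m) - 1) * sum f UNIV"
  using sum_off_diagonal_swap[of "\<lambda>r s. f r"] sum_off_diagonal_fst[of f] by simp

lemma card_off_diagonal: "real (card (off_diagonal :: ('m::finite \<times> 'm) set)) = real CARD('m) * (real CARD('m) - 1)"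
  using sum_off_diagonal_fst[of "\<lambda>_::'m. 1"] by (simp add: case_prod_unfold)

lemma off_diagonal_nonempty:
  assumes "CARD('m::finite) \<ge> 2"
  shows "(off_diagonal :: ('m \<times> 'm) set) \<noteq> {}"
proof -
  have "real CARD('m) \<ge> 2" using assms by simp
  then have "real (card (off_diagonal :: ('m \<times> 'm) set)) > 0"
    unfolding card_off_diagonal by (intro mult_pos_pos) auto
  then show ?thesis by (metis card.empty of_nat_0 order.irrefl)
qed

lemma sum_off_diagonal_by_snd:
  "(\<Sum>p\<in>off_diagonal. f p) = (\<Sum>s\<in>UNIV. \<Sum>r\<in>UNIV - {s}. f (r, s))"
proof -
  have "(\<Sum>p\<in>off_diagonal. f p) = (\<Sum>(r, s)\<in>off_diagonal. f (s, r))"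
    using sum_off_diagonal_swap[of "\<lambda>r s. f (r, s)"] by (simp add: case_prod_unfold)
  also have "\<dots> = (\<Sum>s\<in>UNIV. \<Sum>r\<in>UNIV - {s}. f (r, s))"
    by (simp add: off_diagonal_Sigma sum.Sigma[symmetric])
  finally show ?thesis .
qed

lemma sum_sqrt_le:
  fixes h :: "'a \<Rightarrow> real"
  assumes "finite P" and "\<And>p. p \<in> P \<Longrightarrow> 0 \<le> h p" and "(\<Sum>p\<in>P. h p) \<le> real (card P) * B"
  shows "(\<Sum>p\<in>P. sqrt (h p)) \<le> real (card P) * sqrt B"
proof -
  have "(\<Sum>p\<in>P. sqrt (h p))^2 \<le> (\<Sum>p\<in>P. (sqrt (h p))^2) * real (card P)"
    by (rule sum_squared_le_sum_of_squares)
  also have "\<dots> = (\<Sum>p\<in>P. h p) * real (card P)"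
    using assms(2) by (simp cong: sum.cong)
  also have "\<dots> \<le> (real (card P) * B) * real (card P)"
    using assms(3) by (intro mult_right_mono) auto
  also have "\<dots> = (real (card P))^2 * B" by (simp add: power2_eq_square)
  finally have "(\<Sum>p\<in>P. sqrt (h p)) \<le> sqrt ((real (card P))^2 * B)"
    by (rule real_le_rsqrt)
  then show ?thesis by (simp add: real_sqrt_mult)
qed

(* Unrolling e(k+1) \<le> q e(k) + c for a contraction factor q: the error is the decaying
   initial error plus the fixed point c / (1 - q) of the recursion. *)
lemma affine_recursion_bound:
  fixes e :: "nat \<Rightarrow> real"
  assumes rec: "\<And>k. e (Suc k) \<le> q * e k + c" and "0 \<le> q" "q < 1" "0 \<le> c"
  shows "e k \<le> q ^ k * e 0 + c / (1 - q)"
proof (induction k)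
  case 0
  then show ?case using assms by simp
next
  case (Suc k)
  have fixpoint: "q * (c / (1 - q)) + c = c / (1 - q)"
    using \<open>q < 1\<close> by (simp add: field_simps)
  have "e (Suc k) \<le> q * e k + c" by (rule rec)
  also have "\<dots> \<le> q * (q ^ k * e 0 + c / (1 - q)) + c"
    using Suc \<open>0 \<le> q\<close> by (simp add: mult_left_mono)
  also have "\<dots> = q ^ Suc k * e 0 + c / (1 - q)"
    using fixpoint by (simp add: algebra_simps)
  finally show ?case .
qed

(* The penalty t^2 (1 - t) / (1 + t) is quasi-concave on [0, 1): on any interval it attains
   its minimum at an endpoint.  Hence D bounds the penalty of every coherence in [\<delta>, \<Delta>]. *)
lemma coherence_penalty_quasiconcave:
  fixes a t b :: real
  assumes "0 \<le> a" "a \<le> t" "t \<le> b" "b < 1"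
  shows "min (a^2 * (1 - a) / (1 + a)) (b^2 * (1 - b) / (1 + b)) \<le> t^2 * (1 - t) / (1 + t)"
proof -
  define Q where "Q x y = x + y - x^2 - y^2 - x * y * (x + y)" for x y :: real
  have diff: "x^2 * (1 - x) / (1 + x) - y^2 * (1 - y) / (1 + y) = (x - y) * Q y x / ((1 + x) * (1 + y))"
    if "0 \<le> x" "0 \<le> y" for x y :: real
    using that by (simp add: Q_def field_simps) (simp add: algebra_simps power2_eq_square power3_eq_cube)
  show ?thesis
  proof (cases "Q a t \<ge> 0")
    case True
    then have "0 \<le> (t - a) * Q a t / ((1 + t) * (1 + a))" using assms by simp
    then show ?thesis using diff[of t a] assms by simp
  next
    case False
    (* Then the value at b is the smaller one: Q t b > 0 would force a + t < 1 and so Q a t \<ge> 0. *)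
    have "Q t b \<le> 0"
    proof (rule ccontr)
      assume pos: "\<not> Q t b \<le> 0"
      have "Q t b - Q t a = (b - a) * (1 + t) * ((1 - t) - (a + b))"
        by (simp add: Q_def algebra_simps power2_eq_square)
      moreover have "0 \<le> (b - a) * (1 + t)" using assms by simp
      moreover have "Q t b - Q t a > 0" using pos False by (simp add: Q_def algebra_simps)
      ultimately have "0 < (1 - t) - (a + b)"
        by (metis mult_nonneg_nonpos not_le order.strict_iff_not)
      then have at: "0 \<le> a + t" "a + t < 1" using assms by auto
      have "(a + t)^2 \<le> a + t" using at by (simp add: power2_eq_square mult_left_le)
      moreover have "a * t * (a + t) \<le> 2 * a * t"
        using at assms mult_left_mono[of "a + t" 2 "a * t"] by (simp add: algebra_simps)
      ultimately have "Q a t \<ge> 0" unfolding Q_def by (simp add: power2_eq_square algebra_simps)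
      with False show False by simp
    qed
    then have "(b - t) * Q t b / ((1 + b) * (1 + t)) \<le> 0"
      using assms by (intro divide_nonpos_pos mult_nonneg_nonpos) auto
    then show ?thesis using diff[of b t] assms by simp
  qed
qed

lemma coherence_pair_bound:
  fixes t x y :: real
  assumes "\<bar>t\<bar> < 1"
  shows "t^2 * (1 - \<bar>t\<bar>) / (1 + \<bar>t\<bar>) * (x^2 + y^2)
           \<le> t^2 / (1 - t^2) * ((x - t * y)^2 + (y - t * x)^2)"
proof -
  have "(1 - \<bar>t\<bar>)^2 * (x^2 + y^2) \<le> (x - t * y)^2 + (y - t * x)^2"
  proof -
    have "(x - t * y)^2 + (y - t * x)^2 - (1 - \<bar>t\<bar>)^2 * (x^2 + y^2)
        = 2 * \<bar>t\<bar> * (x^2 + y^2) - 4 * t * x * y"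
      by (simp add: power2_eq_square algebra_simps)
    also have "\<dots> = (if t \<ge> 0 then 2 * t * (x - y)^2 else 2 * (- t) * (x + y)^2)"
      by (simp add: power2_eq_square algebra_simps)
    also have "\<dots> \<ge> 0" by (simp add: mult_nonpos_nonneg)
    finally show ?thesis by simp
  qed
  moreover have "1 - t^2 = (1 - \<bar>t\<bar>) * (1 + \<bar>t\<bar>)"
    by (simp add: power2_eq_square algebra_simps abs_mult_self_eq)
  moreover have "0 < 1 - \<bar>t\<bar>" using assms by simp
  ultimately have "t^2 / (1 - t^2) * ((1 - \<bar>t\<bar>)^2 * (x^2 + y^2))
                 \<le> t^2 / (1 - t^2) * ((x - t * y)^2 + (y - t * x)^2)"
    by (intro mult_left_mono) auto
  moreover have "t^2 / (1 - t^2) * (1 - \<bar>t\<bar>)^2 = t^2 * (1 - \<bar>t\<bar>) / (1 + \<bar>t\<bar>)"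
  proof -
    have "t^2 / (a * b) * a^2 = t^2 * a / b" if "0 < a" "0 < b" for a b :: real
      using that by (simp add: field_simps power2_eq_square)
    with \<open>0 < 1 - \<bar>t\<bar>\<close> show ?thesis unfolding \<open>1 - t^2 = _\<close> by simp
  qed
  ultimately show ?thesis by (metis mult.assoc)
qed

lemma norm_matrix_vector_sq:
  fixes A :: "real^'n^'m"
  shows "norm (A *v z)^2 = (\<Sum>i\<in>UNIV. (inner (A$i) z)^2)"
  by (simp add: norm_vec_def L2_set_def sum_nonneg matrix_vector_mul_component)

lemma norm_matrix_vector_sq_le:
  fixes A :: "real^'n^'m"
  assumes "\<And>i. norm (A$i) = 1"
  shows "norm (A *v z)^2 \<le> real CARD('m) * norm z^2"
proof -
  have "(inner (A$i) z)^2 \<le> norm z^2" for i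
    using Cauchy_Schwarz_ineq2[of "A$i" z] assms[of i]
    by (metis abs_ge_zero mult_1 power2_abs power_mono)
  then have "(\<Sum>i\<in>UNIV. (inner (A$i) z)^2) \<le> (\<Sum>i\<in>(UNIV::'m set). norm z^2)"
    by (intro sum_mono)
  then show ?thesis by (simp add: norm_matrix_vector_sq)
qed

lemma lower_frame_bound_le_card:
  fixes A :: "real^'n^'m"
  assumes "\<And>i. norm (A$i) = 1" and "\<And>z. \<sigma> * norm z^2 \<le> norm (A *v z)^2"
  shows "\<sigma> \<le> real CARD('m)"
proof -
  define e :: "real^'n" where "e = axis undefined 1"
  have "norm e = 1" by (simp add: e_def)
  then show ?thesis using assms(2)[of e] norm_matrix_vector_sq_le[OF assms(1), of e] by simp
qed

lemma coherence_bounds: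
  fixes A :: "real^'n^'m"
  assumes "no_parallel_rows A" and "CARD('m) \<ge> 2"
  shows "0 \<le> coh_min A" and "coh_min A \<le> coh_max A" and "coh_max A < 1"
    and "\<And>r s. r \<noteq> s \<Longrightarrow> coh_min A \<le> \<bar>inner (A$r) (A$s)\<bar> \<and> \<bar>inner (A$r) (A$s)\<bar> \<le> coh_max A"
proof -
  define C where "C = {\<bar>inner (A$j) (A$k)\<bar> | j k. j \<noteq> k}"
  have "finite C"
    by (rule finite_subset[of _ "(\<lambda>(j, k). \<bar>inner (A$j) (A$k)\<bar>) ` UNIV"]) (auto simp: C_def)
  obtain j k :: 'm where "(j, k) \<in> off_diagonal"
    using off_diagonal_nonempty[OF assms(2)] by auto
  then have "C \<noteq> {}" by (auto simp: C_def off_diagonal_def)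
  have range: "0 \<le> t \<and> t < 1" if "t \<in> C" for t
    using that assms(1) by (auto simp: C_def no_parallel_rows_def)
  show "0 \<le> coh_min A" using range[OF Min_in[OF \<open>finite C\<close> \<open>C \<noteq> {}\<close>]]
    by (simp add: coh_min_def C_def)
  show "coh_max A < 1" using range[OF Max_in[OF \<open>finite C\<close> \<open>C \<noteq> {}\<close>]]
    by (simp add: coh_max_def C_def)
  show "coh_min A \<le> coh_max A"
    using Min_le[OF \<open>finite C\<close> Max_in[OF \<open>finite C\<close> \<open>C \<noteq> {}\<close>]] by (simp add: coh_min_def coh_max_def C_def)
  show "coh_min A \<le> \<bar>inner (A$r) (A$s)\<bar> \<and> \<bar>inner (A$r) (A$s)\<bar> \<le> coh_max A" if "r \<noteq> s" for r s
  proof -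
    have "\<bar>inner (A$r) (A$s)\<bar> \<in> C" using that by (auto simp: C_def)
    then show ?thesis using \<open>finite C\<close> by (simp add: coh_min_def coh_max_def C_def[symmetric])
  qed
qed

lemma coherence_penalty_bounds:
  fixes A :: "real^'n^'m"
  assumes "no_parallel_rows A" and "CARD('m) \<ge> 2"
  defines "D \<equiv> min (coh_min A^2 * (1 - coh_min A) / (1 + coh_min A))
                     (coh_max A^2 * (1 - coh_max A) / (1 + coh_max A))"
  shows "0 \<le> D"
    and "\<And>r s. r \<noteq> s \<Longrightarrow>
           D \<le> (inner (A$r) (A$s))^2 * (1 - \<bar>inner (A$r) (A$s)\<bar>) / (1 + \<bar>inner (A$r) (A$s)\<bar>)"
proof -
  note coh = coherence_bounds[OF assms(1,2)]
  show "D \<le> (inner (A$r) (A$s))^2 * (1 - \<bar>inner (A$r) (A$s)\<bar>) / (1 + \<bar>inner (A$r) (A$s)\<bar>)"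
    if "r \<noteq> s" for r s
    using coherence_penalty_quasiconcave[of "coh_min A" "\<bar>inner (A$r) (A$s)\<bar>" "coh_max A"] coh that
    by (simp add: D_def)
  show "0 \<le> D" using coh(1-3) by (simp add: D_def)
qed

lemma sup_norm_ge: "\<bar>w $ i\<bar> \<le> sup_norm w"
proof -
  have "{\<bar>w $ i\<bar> | i. True} = range (\<lambda>i. \<bar>w $ i\<bar>)" by auto
  then show ?thesis unfolding sup_norm_def by (intro Max_ge) auto
qed

(* Full column rank makes A injective, hence bounded below: |z| \<le> |A^-1| |A z|. *)
lemma inv_norm_lower_bound:
  fixes A :: "real^'n^'m"
  assumes "rank A = CARD('n)"
  shows "inv_norm A > 0" and "norm z \<le> inv_norm A * norm (A *v z)"
proof -
  define Ms where "Ms = {M. \<forall>z. M * norm (A *v z) \<ge> norm z}"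
  have "inj ((*v) A)" using assms full_rank_injective by blast
  then have kernel: "A *v z = 0 \<Longrightarrow> z = 0" for z by (metis injD matrix_vector_mult_0_right)
  obtain e where e: "e > 0" "\<And>z. e * norm z \<le> norm (A *v z)"
    using injective_imp_isometric[of UNIV "(*v) A"] kernel by auto
  have "1 / e \<in> Ms" unfolding Ms_def using e by (auto simp: field_simps mult.commute)
  have bound: "norm z \<le> Inf Ms * norm (A *v z)" for z
  proof (cases "A *v z = 0")
    case True
    then show ?thesis using kernel by simp
  next
    case False
    then have "norm (A *v z) > 0" by simp
    moreover have "norm z / norm (A *v z) \<le> Inf Ms"
    proof (rule cInf_greatest)
      show "Ms \<noteq> {}" using \<open>1 / e \<in> Ms\<close> by auto
    next
      fix M assume "M \<in> Ms"
      then show "norm z / norm (A *v z) \<le> M"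
        using \<open>norm (A *v z) > 0\<close> by (simp add: Ms_def divide_le_eq)
    qed
    ultimately show ?thesis by (simp add: divide_le_eq)
  qed
  then show "norm z \<le> inv_norm A * norm (A *v z)" for z unfolding inv_norm_def Ms_def by simp
  define a :: "real^'n" where "a = axis undefined 1"
  have "1 \<le> Inf Ms * norm (A *v a)" using bound[of a] by (simp add: a_def)
  then have "Inf Ms > 0" by (smt (verit) mult_nonpos_nonneg norm_ge_zero)
  then show "inv_norm A > 0" unfolding inv_norm_def Ms_def by simp
qed

lemma scaled_cond_standardized:
  fixes A :: "real^'n^'m"
  assumes "standardized A"
  shows "scaled_cond A = real CARD('m) * (inv_norm A)^2"
proof -
  have "(\<Sum>j\<in>UNIV. (A$i$j)^2) = 1" for i
    using assms by (simp add: standardized_def norm_vec_def L2_set_def sum_nonneg)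
  then show ?thesis by (simp add: scaled_cond_def frobenius_norm_def sum_nonneg)
qed

lemma scaled_cond_lower_frame:
  fixes A :: "real^'n^'m"
  assumes "standardized A" and "rank A = CARD('n)"
  shows "0 < scaled_cond A" and "real CARD('m) / scaled_cond A * norm z^2 \<le> norm (A *v z)^2"
proof -
  define N where "N = inv_norm A"
  have "0 < N" and "norm z \<le> N * norm (A *v z)"
    using inv_norm_lower_bound[OF assms(2)] by (simp_all add: N_def)
  moreover have R: "scaled_cond A = real CARD('m) * N^2"
    using scaled_cond_standardized[OF assms(1)] by (simp add: N_def)
  ultimately show "0 < scaled_cond A" by simp
  have "norm z^2 \<le> N^2 * norm (A *v z)^2"
    using power_mono[OF \<open>norm z \<le> N * norm (A *v z)\<close>, of 2] by (simp add: power_mult_distrib)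
  then show "real CARD('m) / scaled_cond A * norm z^2 \<le> norm (A *v z)^2"
    using \<open>0 < N\<close> by (simp add: R field_simps)
qed

(* Given the pair (r, s), the step projects onto the hyperplane of row s and
   then onto that of the unit vector v = (a_r - \<mu> a_s) / sqrt (1 - \<mu>^2), which is orthogonal to a_s. *)
definition tsk_direction :: "real^'n^'m \<Rightarrow> 'm \<Rightarrow> 'm \<Rightarrow> real^'n" where
  "tsk_direction A r s =
     (1 / sqrt (1 - (inner (A$r) (A$s))^2)) *\<^sub>R (A$r - inner (A$r) (A$s) *\<^sub>R A$s)"

(* Squared length of the projection of d onto span {a_r, a_s}: the error reduction of one step. *)
definition pair_gain :: "real^'n^'m \<Rightarrow> real^'n \<Rightarrow> 'm \<times> 'm \<Rightarrow> real" where
  "pair_gain A d p = (case p of (r, s) \<Rightarrow>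
     (inner (A$s) d)^2
     + (inner (A$r) d - inner (A$r) (A$s) * inner (A$s) d)^2 / (1 - (inner (A$r) (A$s))^2))"

lemma tsk_direction_facts:
  fixes A :: "real^'n^'m"
  assumes unit: "norm (A$r) = 1" "norm (A$s) = 1" and lt1: "\<bar>inner (A$r) (A$s)\<bar> < 1"
  defines "v \<equiv> tsk_direction A r s"
  shows "inner (A$s) v = 0" and "inner v v = 1"
    and "inner d v = (inner (A$r) d - inner (A$r) (A$s) * inner (A$s) d)
                     / sqrt (1 - (inner (A$r) (A$s))^2)"
proof -
  define mu where "mu = inner (A$r) (A$s)"
  have pos: "1 - mu^2 > 0" using lt1 by (simp add: mu_def abs_square_less_1)
  have rr: "inner (A$r) (A$r) = 1" and ss: "inner (A$s) (A$s) = 1"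
    using unit by (simp_all add: norm_eq_1)
  show "inner (A$s) v = 0"
    by (simp add: v_def tsk_direction_def inner_diff_right ss inner_commute)
  have "inner (A$r - mu *\<^sub>R A$s) (A$r - mu *\<^sub>R A$s) = 1 - mu^2"
    by (simp add: inner_diff_left inner_diff_right rr ss mu_def inner_commute power2_eq_square)
  then show "inner v v = 1"
    using pos by (simp add: v_def tsk_direction_def mu_def[symmetric] power2_eq_square)
  show "inner d v = (inner (A$r) d - inner (A$r) (A$s) * inner (A$s) d)
                     / sqrt (1 - (inner (A$r) (A$s))^2)"
    by (simp add: v_def tsk_direction_def inner_diff_right inner_commute)
qed

lemma norm_residual_orthonormal_pair:
  fixes d a v :: "'a::real_inner"
  assumes "inner a a = 1" "inner v v = 1" "inner a v = 0"
  shows "norm (d - inner d a *\<^sub>R a - inner d v *\<^sub>R v)^2 = norm d^2 - (inner d a)^2 - (inner d v)^2"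
  using assms unfolding power2_norm_eq_inner
  by (simp add: inner_diff_left inner_diff_right power2_eq_square algebra_simps
      inner_commute[of a d] inner_commute[of v d] inner_commute[of v a])

lemma pair_gain_as_projection:
  fixes A :: "real^'n^'m"
  assumes "norm (A$r) = 1" "norm (A$s) = 1" "\<bar>inner (A$r) (A$s)\<bar> < 1"
  shows "norm d^2 - pair_gain A d (r, s)
       = norm (d - inner d (A$s) *\<^sub>R A$s - inner d (tsk_direction A r s) *\<^sub>R tsk_direction A r s)^2"
proof -
  have "1 - (inner (A$r) (A$s))^2 > 0" using assms(3) by (simp add: abs_square_less_1)
  then have "(inner d (tsk_direction A r s))^2
           = (inner (A$r) d - inner (A$r) (A$s) * inner (A$s) d)^2 / (1 - (inner (A$r) (A$s))^2)"
    using tsk_direction_facts(3)[OF assms] by (simp add: power_divide)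
  moreover have "inner (A$s) (A$s) = 1" using assms(2) by (simp add: norm_eq_1)
  ultimately show ?thesis
    using norm_residual_orthonormal_pair[of "A$s" "tsk_direction A r s" d] tsk_direction_facts[OF assms]
    by (simp add: pair_gain_def inner_commute)
qed

lemma pair_gain_le:
  fixes A :: "real^'n^'m"
  assumes "norm (A$r) = 1" "norm (A$s) = 1" "\<bar>inner (A$r) (A$s)\<bar> < 1"
  shows "pair_gain A d (r, s) \<le> norm d^2"
  using pair_gain_as_projection[OF assms, of d] by (metis diff_ge_0_iff_ge zero_le_power2)

lemma tsk_step_error_decomposition:
  fixes A :: "real^'n^'m" and x x' :: "real^'n" and w :: "real^'m"
  assumes unit: "norm (A$s) = 1" and lt1: "\<bar>inner (A$r) (A$s)\<bar> < 1"
  defines "mu \<equiv> inner (A$r) (A$s)" and "v \<equiv> tsk_direction A r s" and "d \<equiv> x' - x"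
  shows "tsk_step A (A *v x + w) x' (r, s) - x
     = (d - inner d (A$s) *\<^sub>R A$s - inner d v *\<^sub>R v)
       + (w$s *\<^sub>R A$s + ((w$r - w$s * mu) / sqrt (1 - mu^2)) *\<^sub>R v)"
proof -
  define k where "k = sqrt (1 - mu^2)"
  have k0: "k > 0" using lt1 by (simp add: k_def mu_def abs_square_less_1)
  have ss: "inner (A$s) (A$s) = 1" using unit by (simp add: norm_eq_1)
  have sv: "inner (A$s) v = 0"
    by (simp add: v_def tsk_direction_def inner_diff_right ss inner_commute)
  have xv: "inner x v = (inner (A$r) x - mu * inner (A$s) x) / k"
    by (simp add: v_def tsk_direction_def k_def mu_def inner_diff_right inner_commute)
  define y where "y = x' + ((A *v x + w)$s - inner x' (A$s)) *\<^sub>R A$s"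
  have y_x: "y - x = d + (w$s - inner d (A$s)) *\<^sub>R A$s"
    unfolding y_def d_def
    by (simp add: matrix_vector_mul_component inner_diff_left inner_commute algebra_simps)
  have yv: "inner y v = inner x v + inner d v"
  proof -
    have "inner y v = inner x v + inner (y - x) v" by (simp add: inner_diff_left)
    also have "inner (y - x) v = inner d v" unfolding y_x by (simp add: inner_add_left sv)
    finally show ?thesis .
  qed
  define beta where "beta = ((A *v x + w)$r - (A *v x + w)$s * mu) / k"
  have beta: "beta = inner x v + (w$r - w$s * mu) / k"
    unfolding beta_def xv using k0
    by (simp add: matrix_vector_mul_component field_simps inner_commute)
  have step: "tsk_step A (A *v x + w) x' (r, s) = y + (beta - inner y v) *\<^sub>R v"
    unfolding tsk_step_def Let_def y_def beta_def v_def k_def mu_def tsk_direction_def by simp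
  show ?thesis
    unfolding step k_def[symmetric] using y_x yv beta by (simp add: algebra_simps)
qed

lemma tsk_step_error_bound:
  fixes A :: "real^'n^'m" and x x' :: "real^'n" and w :: "real^'m"
  assumes "norm (A$r) = 1" "norm (A$s) = 1" "\<bar>inner (A$r) (A$s)\<bar> < 1"
  defines "mu \<equiv> inner (A$r) (A$s)"
  shows "norm (x - tsk_step A (A *v x + w) x' (r, s))
         \<le> sqrt (norm (x' - x)^2 - pair_gain A (x' - x) (r, s))
           + (\<bar>w$s\<bar> + \<bar>w$r - w$s * mu\<bar> / sqrt (1 - mu^2))"
proof -
  define d where "d = x' - x"
  define v where "v = tsk_direction A r s"
  define c where "c = (w$r - w$s * mu) / sqrt (1 - mu^2)"
  have "sqrt (1 - mu^2) > 0" using assms(3) by (simp add: mu_def abs_square_less_1)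
  then have c: "\<bar>c\<bar> = \<bar>w$r - w$s * mu\<bar> / sqrt (1 - mu^2)" by (simp add: c_def)
  have v: "norm v = 1" using tsk_direction_facts(2)[OF assms(1-3)] by (simp add: v_def norm_eq_1)
  have "norm (x - tsk_step A (A *v x + w) x' (r, s)) = norm (tsk_step A (A *v x + w) x' (r, s) - x)"
    by (simp add: norm_minus_commute)
  also have "\<dots> = norm ((d - inner d (A$s) *\<^sub>R A$s - inner d v *\<^sub>R v) + (w$s *\<^sub>R A$s + c *\<^sub>R v))"
    unfolding tsk_step_error_decomposition[OF assms(2,3)] by (simp add: d_def v_def c_def mu_def)
  also have "\<dots> \<le> norm (d - inner d (A$s) *\<^sub>R A$s - inner d v *\<^sub>R v) + (norm (w$s *\<^sub>R A$s) + norm (c *\<^sub>R v))"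
    by (meson norm_triangle_ineq norm_triangle_le add_left_mono order_trans)
  also have "\<dots> = sqrt (norm d^2 - pair_gain A d (r, s)) + (\<bar>w$s\<bar> + \<bar>c\<bar>)"
    using pair_gain_as_projection[OF assms(1-3), of d] v assms(2) by (simp add: v_def)
  finally show ?thesis by (simp add: c d_def)
qed

lemma tsk_noise_bound:
  fixes ws wr mu \<Delta> W :: real
  assumes ws: "\<bar>ws\<bar> \<le> W" and wr: "\<bar>wr\<bar> \<le> W" and mu: "\<bar>mu\<bar> \<le> \<Delta>" and "\<Delta> < 1"
  shows "\<bar>ws\<bar> + \<bar>wr - ws * mu\<bar> / sqrt (1 - mu^2) \<le> 3 * W / sqrt (1 - \<Delta>^2)"
proof -
  define k0 where "k0 = sqrt (1 - \<Delta>^2)"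
  have "mu^2 \<le> \<Delta>^2" using mu by (metis abs_ge_zero power2_abs power_mono)
  then have k0_le: "k0 \<le> sqrt (1 - mu^2)" by (simp add: k0_def)
  have k0_pos: "0 < k0" and k0_le1: "k0 \<le> 1"
    using assms(4) mu by (simp_all add: k0_def abs_square_less_1)
  have W: "0 \<le> W" using ws by linarith
  have "\<bar>ws\<bar> \<le> W / k0"
    using ws W k0_pos k0_le1 by (simp add: le_divide_eq) (meson abs_ge_zero mult_left_le order_trans)
  moreover have "\<bar>wr - ws * mu\<bar> / sqrt (1 - mu^2) \<le> 2 * W / k0"
  proof -
    have "\<bar>wr - ws * mu\<bar> \<le> \<bar>wr\<bar> + \<bar>ws\<bar> * \<bar>mu\<bar>" by (metis abs_mult abs_triangle_ineq4)
    also have "\<dots> \<le> W + W * 1" using ws wr mu assms(4) by (intro add_mono mult_mono) auto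
    finally show ?thesis using k0_pos k0_le W by (intro frac_le) auto
  qed
  ultimately show ?thesis by (simp add: k0_def add_divide_distrib[symmetric])
qed

lemma pair_gain_split:
  fixes A :: "real^'n^'m"
  assumes "\<bar>inner (A$r) (A$s)\<bar> < 1"
  shows "pair_gain A d (r, s)
       = (inner (A$s) d)^2 + (inner (A$r) d - inner (A$r) (A$s) * inner (A$s) d)^2
         + (inner (A$r) (A$s))^2 / (1 - (inner (A$r) (A$s))^2)
           * (inner (A$r) d - inner (A$r) (A$s) * inner (A$s) d)^2"
proof -
  have "(inner (A$r) (A$s))^2 < 1" using assms by (simp add: abs_square_less_1)
  then show ?thesis by (simp add: pair_gain_def field_simps)
qed

(* For fixed s the residuals c_r - \<mu>_rs c_s are the row projections of d - c_s a_s,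
   so the lower frame bound applies to them. *)
lemma pair_residual_sum_lower:
  fixes A :: "real^'n^'m"
  assumes unit: "\<And>i. norm (A$i) = 1" and lower: "\<And>z. \<sigma> * norm z^2 \<le> norm (A *v z)^2"
  shows "\<sigma> * (real CARD('m) * norm d^2 - norm (A *v d)^2)
           \<le> (\<Sum>(r, s)\<in>off_diagonal. (inner (A$r) d - inner (A$r) (A$s) * inner (A$s) d)^2)"
proof -
  have column: "\<sigma> * (norm d^2 - (inner (A$s) d)^2)
        \<le> (\<Sum>r\<in>UNIV - {s}. (inner (A$r) d - inner (A$r) (A$s) * inner (A$s) d)^2)" for s
  proof -
    define y where "y = d - inner (A$s) d *\<^sub>R A$s"
    have ss: "inner (A$s) (A$s) = 1" using unit[of s] by (simp add: norm_eq_1)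
    have ry: "inner (A$r) y = inner (A$r) d - inner (A$r) (A$s) * inner (A$s) d" for r
      by (simp add: y_def inner_diff_right)
    have "norm y^2 = norm d^2 - (inner (A$s) d)^2"
      unfolding y_def power2_norm_eq_inner
      by (simp add: inner_diff_left inner_diff_right ss inner_commute power2_eq_square algebra_simps)
    then have "\<sigma> * (norm d^2 - (inner (A$s) d)^2) \<le> (\<Sum>r\<in>UNIV. (inner (A$r) y)^2)"
      using lower[of y] by (simp add: norm_matrix_vector_sq)
    also have "\<dots> = (\<Sum>r\<in>UNIV - {s}. (inner (A$r) y)^2)"
      using ry[of s] ss by (simp add: sum_diff1 inner_commute)
    finally show ?thesis by (simp add: ry)
  qed
  have "\<sigma> * (real CARD('m) * norm d^2 - norm (A *v d)^2)
        = (\<Sum>s\<in>UNIV. \<sigma> * (norm d^2 - (inner (A$s) d)^2))"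
    by (simp add: norm_matrix_vector_sq sum_distrib_left[symmetric] sum_subtractf)
  also have "\<dots> \<le> (\<Sum>s\<in>UNIV. \<Sum>r\<in>UNIV - {s}. (inner (A$r) d - inner (A$r) (A$s) * inner (A$s) d)^2)"
    by (intro sum_mono column)
  also have "\<dots> = (\<Sum>(r, s)\<in>off_diagonal. (inner (A$r) d - inner (A$r) (A$s) * inner (A$s) d)^2)"
    by (rule sum_off_diagonal_by_snd[symmetric, where f="\<lambda>(r, s). _ r s", simplified])
  finally show ?thesis .
qed

(* Pairing (r, s) with (s, r), the coherence terms add up to at least D (m - 1) |A d|^2. *)
lemma pair_penalty_sum_lower:
  fixes A :: "real^'n^'m" and d :: "real^'n"
  assumes lt1: "\<And>r s. r \<noteq> s \<Longrightarrow> \<bar>inner (A$r) (A$s)\<bar> < 1"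
    and D: "\<And>r s. r \<noteq> s \<Longrightarrow>
              D \<le> (inner (A$r) (A$s))^2 * (1 - \<bar>inner (A$r) (A$s)\<bar>) / (1 + \<bar>inner (A$r) (A$s)\<bar>)"
  defines "h \<equiv> \<lambda>r s. (inner (A$r) (A$s))^2 / (1 - (inner (A$r) (A$s))^2)
                      * (inner (A$r) d - inner (A$r) (A$s) * inner (A$s) d)^2"
  shows "D * (real CARD('m) - 1) * norm (A *v d)^2 \<le> (\<Sum>(r, s)\<in>off_diagonal. h r s)"
proof -
  have pair: "D * ((inner (A$r) d)^2 + (inner (A$s) d)^2) \<le> h r s + h s r"
    if "(r, s) \<in> off_diagonal" for r s
  proof -
    define t where "t = inner (A$r) (A$s)"
    have "r \<noteq> s" using that by (simp add: off_diagonal_def)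
    then have "D * ((inner (A$r) d)^2 + (inner (A$s) d)^2)
             \<le> t^2 * (1 - \<bar>t\<bar>) / (1 + \<bar>t\<bar>) * ((inner (A$r) d)^2 + (inner (A$s) d)^2)"
      using D[of r s] by (intro mult_right_mono) (auto simp: t_def)
    also have "\<dots> \<le> t^2 / (1 - t^2) * ((inner (A$r) d - t * inner (A$s) d)^2
                                         + (inner (A$s) d - t * inner (A$r) d)^2)"
      using coherence_pair_bound lt1[OF \<open>r \<noteq> s\<close>] by (simp add: t_def)
    also have "\<dots> = h r s + h s r"
      by (simp add: h_def t_def inner_commute[of "A$s" "A$r"] distrib_left)
    finally show ?thesis .
  qed
  have "2 * (D * (real CARD('m) - 1) * norm (A *v d)^2)
        = (\<Sum>(r, s)\<in>off_diagonal. D * ((inner (A$r) d)^2 + (inner (A$s) d)^2))"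
    by (simp add: case_prod_unfold sum.distrib sum_distrib_left[symmetric]
        sum_off_diagonal_fst[of "\<lambda>r. (inner (A$r) d)^2", unfolded case_prod_unfold]
        sum_off_diagonal_snd[of "\<lambda>r. (inner (A$r) d)^2", unfolded case_prod_unfold]
        norm_matrix_vector_sq)
  also have "\<dots> \<le> (\<Sum>(r, s)\<in>off_diagonal. h r s + h s r)"
    using pair by (intro sum_mono) auto
  also have "\<dots> = 2 * (\<Sum>(r, s)\<in>off_diagonal. h r s)"
    using sum_off_diagonal_swap[of h] by (simp add: case_prod_unfold sum.distrib)
  finally show ?thesis by simp
qed

lemma pair_gain_sum_lower_bound:
  fixes A :: "real^'n^'m" and d :: "real^'n"
  assumes unit: "\<And>i. norm (A$i) = 1"
    and lt1: "\<And>r s. r \<noteq> s \<Longrightarrow> \<bar>inner (A$r) (A$s)\<bar> < 1"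
    and D: "\<And>r s. r \<noteq> s \<Longrightarrow>
              D \<le> (inner (A$r) (A$s))^2 * (1 - \<bar>inner (A$r) (A$s)\<bar>) / (1 + \<bar>inner (A$r) (A$s)\<bar>)"
    and "0 \<le> D"
    and lower: "\<And>z. \<sigma> * norm z^2 \<le> norm (A *v z)^2" and "0 \<le> \<sigma>"
  defines "m \<equiv> real CARD('m)" and "u \<equiv> \<sigma> / real CARD('m)"
  shows "m * (m - 1) * (2 * u - u^2 + D * u) * norm d^2 \<le> (\<Sum>p\<in>off_diagonal. pair_gain A d p)"
proof -
  define E where "E = norm d^2"
  define S where "S = norm (A *v d)^2"
  have m1: "1 \<le> m" by (simp add: m_def)
  have \<sigma>: "\<sigma> = u * m" by (simp add: u_def m_def)
  have S_lower: "\<sigma> * E \<le> S" and S_upper: "S \<le> m * E"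
    using lower[of d] norm_matrix_vector_sq_le[OF unit, of d] by (simp_all add: E_def S_def m_def)
  have u_le: "u \<le> 1"
    using lower_frame_bound_le_card[OF unit lower] m1 by (simp add: \<sigma> m_def)
  have u_nonneg: "0 \<le> u" using \<open>0 \<le> \<sigma>\<close> by (simp add: u_def)
  have "(m - 1) * S + \<sigma> * (m * E - S) + D * (m - 1) * S
        \<le> (\<Sum>(r, s)\<in>off_diagonal. (inner (A$s) d)^2)
          + (\<Sum>(r, s)\<in>off_diagonal. (inner (A$r) d - inner (A$r) (A$s) * inner (A$s) d)^2)
          + (\<Sum>(r, s)\<in>off_diagonal. (inner (A$r) (A$s))^2 / (1 - (inner (A$r) (A$s))^2)
                                        * (inner (A$r) d - inner (A$r) (A$s) * inner (A$s) d)^2)"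
    using pair_residual_sum_lower[OF unit lower, of d] pair_penalty_sum_lower[OF lt1 D, of d]
      sum_off_diagonal_snd[of "\<lambda>s. (inner (A$s) d)^2"]
    by (simp add: norm_matrix_vector_sq E_def S_def m_def)
  also have "\<dots> = (\<Sum>(r, s)\<in>off_diagonal. (inner (A$s) d)^2
           + (inner (A$r) d - inner (A$r) (A$s) * inner (A$s) d)^2
           + (inner (A$r) (A$s))^2 / (1 - (inner (A$r) (A$s))^2)
             * (inner (A$r) d - inner (A$r) (A$s) * inner (A$s) d)^2)"
    by (simp add: sum.distrib case_prod_unfold)
  also have "\<dots> = (\<Sum>p\<in>off_diagonal. pair_gain A d p)"
    by (intro sum.cong) (auto simp: off_diagonal_def pair_gain_split lt1)
  finally have gain: "(m - 1) * S + \<sigma> * (m * E - S) + D * (m - 1) * S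
                      \<le> (\<Sum>p\<in>off_diagonal. pair_gain A d p)" .
  have "(m - 1) * ((1 + D - u) * S + u * m * E) \<le> (m - 1) * S + \<sigma> * (m * E - S) + D * (m - 1) * S"
    using mult_right_mono[OF S_upper u_nonneg] unfolding \<sigma> by (simp add: algebra_simps)
  moreover have "(m - 1) * ((1 + D - u) * (u * m * E) + u * m * E)
               \<le> (m - 1) * ((1 + D - u) * S + u * m * E)"
    using S_lower u_le \<open>0 \<le> D\<close> m1 unfolding \<sigma> by (intro mult_left_mono add_right_mono) auto
  moreover have "(m - 1) * ((1 + D - u) * (u * m * E) + u * m * E) = m * (m - 1) * (2 * u - u^2 + D * u) * E"
    by (simp add: power2_eq_square algebra_simps)
  ultimately show ?thesis using gain unfolding E_def by linarith
qed

lemma pair_gain_sum_le: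
  fixes A :: "real^'n^'m"
  assumes "\<And>i. norm (A$i) = 1" and "\<And>r s. r \<noteq> s \<Longrightarrow> \<bar>inner (A$r) (A$s)\<bar> < 1"
  shows "(\<Sum>p\<in>off_diagonal. pair_gain A d p) \<le> real (card (off_diagonal :: ('m \<times> 'm) set)) * norm d^2"
proof -
  have "(\<Sum>p\<in>off_diagonal. pair_gain A d p) \<le> (\<Sum>p\<in>(off_diagonal :: ('m \<times> 'm) set). norm d^2)"
    by (intro sum_mono) (auto simp: off_diagonal_def intro!: pair_gain_le assms)
  then show ?thesis by simp
qed

lemma contraction_rate:
  fixes A :: "real^'n^'m"
  assumes card: "CARD('m) \<ge> 2"
    and unit: "\<And>i. norm (A$i) = 1"
    and lt1: "\<And>r s. r \<noteq> s \<Longrightarrow> \<bar>inner (A$r) (A$s)\<bar> < 1"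
    and D: "\<And>r s. r \<noteq> s \<Longrightarrow>
              D \<le> (inner (A$r) (A$s))^2 * (1 - \<bar>inner (A$r) (A$s)\<bar>) / (1 + \<bar>inner (A$r) (A$s)\<bar>)"
    and "0 \<le> D"
    and lower: "\<And>z. \<sigma> * norm z^2 \<le> norm (A *v z)^2" and "0 < \<sigma>"
  defines "u \<equiv> \<sigma> / real CARD('m)"
  defines "\<eta> \<equiv> (1 - u)^2 - D * u"
  shows "\<And>d. real (card (off_diagonal :: ('m \<times> 'm) set)) * (1 - \<eta>) * norm d^2
               \<le> (\<Sum>p\<in>off_diagonal. pair_gain A d p)"
    and "0 \<le> \<eta>" and "\<eta> < 1"
proof -
  have "1 - \<eta> = 2 * u - u^2 + D * u" by (simp add: \<eta>_def power2_eq_square algebra_simps)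
  then show gain: "real (card (off_diagonal :: ('m \<times> 'm) set)) * (1 - \<eta>) * norm d^2
               \<le> (\<Sum>p\<in>off_diagonal. pair_gain A d p)" for d
    using pair_gain_sum_lower_bound[OF unit lt1 D \<open>0 \<le> D\<close> lower, of d] \<open>0 < \<sigma>\<close>
    by (simp add: card_off_diagonal u_def)
  define P where "P = (off_diagonal :: ('m \<times> 'm) set)"
  have "real (card P) * (1 - \<eta>) \<le> real (card P) * 1"
    using gain[of "axis undefined 1"] pair_gain_sum_le[OF unit lt1, of "axis undefined 1"]
    by (simp add: P_def)
  moreover have "0 < real (card P)"
    using off_diagonal_nonempty[OF card] by (simp add: P_def card_gt_0_iff)
  ultimately show "0 \<le> \<eta>" by (simp add: mult_le_cancel_left_pos)
  have "0 < u" "u \<le> 1"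
    using \<open>0 < \<sigma>\<close> lower_frame_bound_le_card[OF unit lower] by (simp_all add: u_def)
  then have "(1 - u)^2 \<le> 1 - u" by (simp add: power2_eq_square mult_left_le)
  moreover have "0 \<le> D * u" using \<open>0 < u\<close> \<open>0 \<le> D\<close> by simp
  ultimately show "\<eta> < 1" using \<open>0 < u\<close> by (simp add: \<eta>_def)
qed

lemma expectation_bind_pmf_finite:
  fixes g :: "'b \<Rightarrow> real"
  assumes fin: "finite (set_pmf (bind_pmf M N))"
  shows "measure_pmf.expectation (bind_pmf M N) g
       = measure_pmf.expectation M (\<lambda>x. measure_pmf.expectation (N x) g)"
proof -
  define Y where "Y = set_pmf (bind_pmf M N)"
  define B where "B = (\<Sum>y\<in>Y. \<bar>g y\<bar>)"
  define g' where "g' y = (if y \<in> Y then g y else 0)" for y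
  have bounded: "\<bar>g' y\<bar> \<le> B" for y
    using fin unfolding B_def g'_def Y_def[symmetric] by (auto intro: member_le_sum)
  have "measure_pmf.expectation (bind_pmf M N) g = measure_pmf.expectation (bind_pmf M N) g'"
    by (intro integral_cong_AE) (auto simp: AE_measure_pmf_iff g'_def Y_def)
  also have "\<dots> = (\<integral>x. measure_pmf.expectation (N x) g' \<partial>M)"
    unfolding measure_pmf_bind
    using measurable_measure_pmf[of N]
    by (intro integral_bind[where K="count_space UNIV" and B=B and B'=1])
       (auto intro: bounded simp: measure_pmf.finite_measure)
  also have "\<dots> = measure_pmf.expectation M (\<lambda>x. measure_pmf.expectation (N x) g)"
    by (intro integral_cong_AE)
       (auto simp: AE_measure_pmf_iff g'_def Y_def intro!: integral_cong_AE)
  finally show ?thesis .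
qed

lemma finite_set_tsk_dist: "finite (set_pmf (tsk_dist A b x0 k))"
  by (induction k) auto

lemma expectation_tsk_dist_Suc_le:
  fixes f :: "real^'n \<Rightarrow> real"
  assumes step: "\<And>y. measure_pmf.expectation (map_pmf (tsk_step A b y) pair_pmf) f \<le> q * f y + c"
  shows "measure_pmf.expectation (tsk_dist A b x0 (Suc k)) f
           \<le> q * measure_pmf.expectation (tsk_dist A b x0 k) f + c"
proof -
  have "measure_pmf.expectation (tsk_dist A b x0 (Suc k)) f
      = measure_pmf.expectation (tsk_dist A b x0 k)
          (\<lambda>y. measure_pmf.expectation (map_pmf (tsk_step A b y) pair_pmf) f)"
    using expectation_bind_pmf_finite[of "tsk_dist A b x0 k" "\<lambda>y. map_pmf (tsk_step A b y) pair_pmf" f]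
      finite_set_tsk_dist[of A b x0 "Suc k"] by simp
  also have "\<dots> \<le> measure_pmf.expectation (tsk_dist A b x0 k) (\<lambda>y. q * f y + c)"
    using step by (intro integral_mono) (auto simp: integrable_measure_pmf_finite finite_set_tsk_dist)
  also have "\<dots> = q * measure_pmf.expectation (tsk_dist A b x0 k) f + c"
    by (simp add: integrable_measure_pmf_finite finite_set_tsk_dist)
  finally show ?thesis .
qed

lemma expected_tsk_step:
  fixes A :: "real^'n^'m" and x y :: "real^'n" and w :: "real^'m"
  assumes m: "CARD('m) \<ge> 2"
    and unit: "\<And>i. norm (A$i) = 1"
    and coh: "\<And>r s. r \<noteq> s \<Longrightarrow> \<bar>inner (A$r) (A$s)\<bar> \<le> \<Delta>" and "\<Delta> < 1"
    and noise: "\<And>i. \<bar>w$i\<bar> \<le> W"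
    and gain: "\<And>d. real (card (off_diagonal :: ('m \<times> 'm) set)) * (1 - \<eta>) * norm d^2
                     \<le> (\<Sum>p\<in>off_diagonal. pair_gain A d p)"
  shows "measure_pmf.expectation (map_pmf (tsk_step A (A *v x + w) y) pair_pmf) (\<lambda>z. norm (x - z))
           \<le> sqrt \<eta> * norm (x - y) + 3 * W / sqrt (1 - \<Delta>^2)"
proof -
  define P where "P = (off_diagonal :: ('m \<times> 'm) set)"
  define d where "d = y - x"
  define C where "C = 3 * W / sqrt (1 - \<Delta>^2)"
  define g where "g p = norm (x - tsk_step A (A *v x + w) y p)" for p
  define h where "h p = norm d^2 - pair_gain A d p" for p
  have P: "finite P" "P \<noteq> {}" and card: "real (card P) > 0"
    using off_diagonal_nonempty[OF m] by (auto simp: P_def card_gt_0_iff)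
  have pair: "norm (A$r) = 1" "norm (A$s) = 1" "\<bar>inner (A$r) (A$s)\<bar> \<le> \<Delta>" "\<bar>inner (A$r) (A$s)\<bar> < 1"
    if "(r, s) \<in> P" for r s
    using that unit coh[of r s] \<open>\<Delta> < 1\<close> by (auto simp: P_def off_diagonal_def)
  have h_nonneg: "0 \<le> h p" if "p \<in> P" for p
    using that pair_gain_le[OF pair(1,2,4)] by (cases p) (auto simp: h_def)
  have g_le: "g p \<le> sqrt (h p) + C" if "p \<in> P" for p
  proof (cases p)
    case (Pair r s)
    with that have rs: "(r, s) \<in> P" by simp
    show ?thesis
      using tsk_step_error_bound[OF pair(1,2,4)[OF rs], where x=x and w=w and x'=y]
        tsk_noise_bound[OF noise[of s] noise[of r] pair(3)[OF rs] \<open>\<Delta> < 1\<close>]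
      by (simp add: Pair g_def h_def d_def C_def)
  qed
  have "(\<Sum>p\<in>P. h p) = real (card P) * norm d^2 - (\<Sum>p\<in>P. pair_gain A d p)"
    by (simp add: h_def sum_subtractf)
  also have "\<dots> \<le> real (card P) * (\<eta> * norm d^2)"
    using gain[of d] by (simp add: P_def algebra_simps)
  finally have "(\<Sum>p\<in>P. sqrt (h p)) \<le> real (card P) * sqrt (\<eta> * norm d^2)"
    using P h_nonneg by (intro sum_sqrt_le) auto
  moreover have "(\<Sum>p\<in>P. g p) \<le> (\<Sum>p\<in>P. sqrt (h p)) + real (card P) * C"
    using sum_mono[of P g "\<lambda>p. sqrt (h p) + C"] g_le by (simp add: sum.distrib)
  ultimately have "(\<Sum>p\<in>P. g p) \<le> real (card P) * (sqrt \<eta> * norm d + C)"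
    by (simp add: real_sqrt_mult algebra_simps)
  moreover have "measure_pmf.expectation (map_pmf (tsk_step A (A *v x + w) y) pair_pmf) (\<lambda>z. norm (x - z))
               = (\<Sum>p\<in>P. g p) / real (card P)"
    using P by (simp add: pair_pmf_def off_diagonal_def P_def g_def integral_pmf_of_set)
  ultimately show ?thesis
    using card by (simp add: divide_le_eq d_def C_def norm_minus_commute mult.commute)
qed

lemma tsk_expected_error_bound:
  fixes A :: "real^'n^'m" and x x0 :: "real^'n" and w :: "real^'m"
  assumes m: "CARD('m) \<ge> 2"
    and unit: "\<And>i. norm (A$i) = 1"
    and coh: "\<And>r s. r \<noteq> s \<Longrightarrow> \<bar>inner (A$r) (A$s)\<bar> \<le> \<Delta>" and "0 \<le> \<Delta>" "\<Delta> < 1"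
    and noise: "\<And>i. \<bar>w$i\<bar> \<le> W"
    and gain: "\<And>d. real (card (off_diagonal :: ('m \<times> 'm) set)) * (1 - \<eta>) * norm d^2
                     \<le> (\<Sum>p\<in>off_diagonal. pair_gain A d p)"
    and "0 \<le> \<eta>" "\<eta> < 1"
  shows "measure_pmf.expectation (tsk_dist A (A *v x + w) x0 k) (\<lambda>xk. norm (x - xk))
           \<le> sqrt \<eta> ^ k * norm (x - x0) + 3 * W / sqrt (1 - \<Delta>^2) / (1 - sqrt \<eta>)"
proof -
  define e where "e k = measure_pmf.expectation (tsk_dist A (A *v x + w) x0 k) (\<lambda>xk. norm (x - xk))"
    for k
  have "e (Suc k) \<le> sqrt \<eta> * e k + 3 * W / sqrt (1 - \<Delta>^2)" for k
    unfolding e_def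
    by (rule expectation_tsk_dist_Suc_le) (rule expected_tsk_step[OF m unit coh \<open>\<Delta> < 1\<close> noise gain])
  moreover have "0 \<le> 3 * W / sqrt (1 - \<Delta>^2)"
    using noise[of undefined] \<open>0 \<le> \<Delta>\<close> \<open>\<Delta> < 1\<close>
    by (intro divide_nonneg_nonneg) (auto simp: abs_square_le_1)
  ultimately have "e k \<le> sqrt \<eta> ^ k * e 0 + 3 * W / sqrt (1 - \<Delta>^2) / (1 - sqrt \<eta>)"
    using \<open>0 \<le> \<eta>\<close> \<open>\<eta> < 1\<close> by (intro affine_recursion_bound) auto
  then show ?thesis by (simp add: e_def)
qed

theorem theorem4:
  fixes A :: "real^'n^'m" and x x0 :: "real^'n" and w :: "real^'m" and k :: nat
  assumes "CARD('m) > CARD('n)"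
    and "rank A = CARD('n)"
    and "standardized A"
    and "no_parallel_rows A"
  defines "b \<equiv> A *v x + w"
    and "R \<equiv> scaled_cond A"
    and "\<Delta> \<equiv> coh_max A"
    and "\<delta> \<equiv> coh_min A"
  defines "D \<equiv> min (\<delta>^2 * (1 - \<delta>) / (1 + \<delta>)) (\<Delta>^2 * (1 - \<Delta>) / (1 + \<Delta>))"
  defines "\<eta> \<equiv> (1 - 1 / R)^2 - D / R"
  shows "measure_pmf.expectation (tsk_dist A b x0 k) (\<lambda>xk. norm (x - xk))
           \<le> sqrt \<eta> ^ k * norm (x - x0)
             + 3 / (1 - sqrt \<eta>) * (sup_norm w / sqrt (1 - \<Delta>^2))"
proof -
  have "0 < CARD('n)" by simp
  then have card: "CARD('m) \<ge> 2" using assms(1) by linarith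
  have unit: "\<And>i. norm (A$i) = 1" using assms(3) by (simp add: standardized_def)
  note coh = coherence_bounds[OF assms(4) card, folded \<Delta>_def \<delta>_def]
  have coh_le: "\<And>r s. r \<noteq> s \<Longrightarrow> \<bar>inner (A$r) (A$s)\<bar> \<le> \<Delta>" using coh(4) by blast
  have lt1: "\<And>r s. r \<noteq> s \<Longrightarrow> \<bar>inner (A$r) (A$s)\<bar> < 1" using coh_le coh(3) by fastforce
  note D = coherence_penalty_bounds[OF assms(4) card, folded \<Delta>_def \<delta>_def, folded D_def]
  note R = scaled_cond_lower_frame[OF assms(3,2), folded R_def]
  (* With the lower frame bound \<sigma> = m / R the abstract rate (1 - u)^2 - D u, u = \<sigma> / m, is \<eta>. *)
  note rate = contraction_rate[OF card unit lt1 D(2) D(1) R(2)]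
  have \<eta>: "\<eta> = (1 - real CARD('m) / R / real CARD('m))^2 - D * (real CARD('m) / R / real CARD('m))"
    by (simp add: \<eta>_def)
  show ?thesis
    using tsk_expected_error_bound[OF card unit coh_le _ coh(3) sup_norm_ge rate(1)] rate(2,3) coh(1,2) R(1)
    by (simp add: \<eta> b_def ac_simps)
qed

end
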